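(* Assume the KKT set $\Omega^*$ is nonempty and fix an initial point $\omega_0=(X^{(0)},Y^{(0)},V^{(0)})$. Then there exist parameters $(\alpha_k,\beta_k)\in\mathcal{S}$, $k\ge0$, such that the sequence $\{\omega_k\}$ generated by the re-parameterized LADMM iteration (defined in the context) converges to a KKT point of $\min_{X,Y}F(X)+G(Y)$ subject to $X=Y$.
   Context: $F,G:\mathbb{R}^{p\times p}\to\mathbb{R}\cup\{+\infty\}$ are proper, closed, convex. A KKT point is $\omega^*=(X^*,Y^*,V^* )$ with $X^*=Y^*$, $-V^*\in\partial F(X^* )$, $V^*\in\partial G(Y^* )$; $\Omega^*$ is the set of KKT points. $\circ$ is the entrywise (Hadamard) product; for a matrix $a$ with positive entries, $1/a$ and $\sqrt{a}$ are entrywise. $\mathcal{S}:=\{(\alpha,\beta)\in\mathbb{R}^{p\times p}\times\mathbb{R}^{p\times p}: 0<\alpha_{ij}<\beta_{ij}\ \forall i,j\}$. Writing $\omega_k=(X^{(k)},Y^{(k)},V^{(k)})$, the re-parameterized LADMM iteration with parameters $(\alpha_k,\beta_k)$ is \[ \begin{aligned} X^{(k+1)} &= \arg\min_X\Big\{F(X)+\tfrac12\Big\|\tfrac{1}{\sqrt{\alpha_k}}\circ\Big(X - X^{(k)} + \alpha_k\circ\big(V^{(k)}+\tfrac{1}{\beta_k}\circ(X^{(k)}-Y^{(k)})\big)\Big)\Big\|_F^2\Big\},\\ Y^{(k+1)} &= \arg\min_Y\Big\{G(Y)+\tfrac12\Big\|\tfrac{1}{\sqrt{\beta_k}}\circ\big(Y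 - X^{(k+1)} - \beta_k\circ V^{(k)}\big)\Big\|_F^2\Big\},\\ V^{(k+1)} &= V^{(k)} + \tfrac{1}{\beta_k}\circ\big(X^{(k+1)} - Y^{(k+1)}\big). \end{aligned} \] Convergence of triples is in the norm $\|\omega\|_F^2=\|X\|_F^2+\|Y\|_F^2+\|V\|_F^2$. *)

theory Defs
  imports "HOL-Analysis.Analysis" "HOL-Library.Extended_Real"
begin

text \<open>p x p real matrices are rendered as real^'n^'n (p = CARD('n)).
  The norm on this type is the Frobenius norm and the inner product is the
  Frobenius inner product.\<close>

type_synonym ('n) mat = "real ^ ('n::finite) ^ 'n"

definition hprod :: "('n::finite) mat \<Rightarrow> ('n::finite) mat \<Rightarrow> ('n::finite) mat" (infixl "\<circ>\<^sub>H" 70) where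
  "a \<circ>\<^sub>H b = (\<chi> i j. a $ i $ j * b $ i $ j)"

definition hinv :: "('n::finite) mat \<Rightarrow> ('n::finite) mat" where
  "hinv a = (\<chi> i j. 1 / a $ i $ j)"

definition hsqrt :: "('n::finite) mat \<Rightarrow> ('n::finite) mat" where
  "hsqrt a = (\<chi> i j. sqrt (a $ i $ j))"

definition proper_fun :: "('a \<Rightarrow> ereal) \<Rightarrow> bool" where
  "proper_fun f \<longleftrightarrow> (\<forall>x. f x \<noteq> -\<infinity>) \<and> (\<exists>x. f x \<noteq> \<infinity>)"

definition epigraph_e :: "('a \<Rightarrow> ereal) \<Rightarrow> ('a \<times> real) set" where
  "epigraph_e f = {(x, t). f x \<le> ereal t}"

definition closed_fun :: "('a::topological_space \<Rightarrow> ereal) \<Rightarrow> bool" where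
  "closed_fun f \<longleftrightarrow> closed (epigraph_e f)"

definition convex_fun :: "('a::real_vector \<Rightarrow> ereal) \<Rightarrow> bool" where
  "convex_fun f \<longleftrightarrow> convex (epigraph_e f)"

definition subdiff :: "('a::real_inner \<Rightarrow> ereal) \<Rightarrow> 'a \<Rightarrow> 'a set" where
  "subdiff f x = {v. \<bar>f x\<bar> \<noteq> \<infinity> \<and> (\<forall>z. f z \<ge> f x + ereal (inner v (z - x)))}"

definition KKT_set :: "(('n::finite) mat \<Rightarrow> ereal) \<Rightarrow> (('n::finite) mat \<Rightarrow> ereal) \<Rightarrow> (('n::finite) mat \<times> ('n::finite) mat \<times> ('n::finite) mat) set" where
  "KKT_set F G = {(X, Y, V). X = Y \<and> - V \<in> subdiff F X \<and> V \<in> subdiff G Y}"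

definition param_set :: "(('n::finite) mat \<times> ('n::finite) mat) set" where
  "param_set = {(a, b). \<forall>i j. 0 < a $ i $ j \<and> a $ i $ j < b $ i $ j}"

definition X_obj :: "(('n::finite) mat \<Rightarrow> ereal) \<Rightarrow> ('n::finite) mat \<Rightarrow> ('n::finite) mat \<Rightarrow> ('n::finite) mat \<times> ('n::finite) mat \<times> ('n::finite) mat \<Rightarrow> ('n::finite) mat \<Rightarrow> ereal" where
  "X_obj F a b w X = (case w of (Xk, Yk, Vk) \<Rightarrow>
     F X + ereal (1/2 * (norm (hinv (hsqrt a) \<circ>\<^sub>H (X - Xk + a \<circ>\<^sub>H (Vk + hinv b \<circ>\<^sub>H (Xk - Yk)))))\<^sup>2))"

definition Y_obj :: "(('n::finite) mat \<Rightarrow> ereal) \<Rightarrow> ('n::finite) mat \<Rightarrow> ('n::finite) mat \<Rightarrow> ('n::finite) mat \<Rightarrow> ('n::finite) mat \<Rightarrow> ereal" where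
  "Y_obj G b Xn Vk Y = G Y + ereal (1/2 * (norm (hinv (hsqrt b) \<circ>\<^sub>H (Y - Xn - b \<circ>\<^sub>H Vk)))\<^sup>2)"

text \<open>One step of the re-parameterized LADMM (argmin expressed as "is a minimizer";
  the minimizers are unique since the objectives are strongly convex).\<close>

definition LADMM_step :: "(('n::finite) mat \<Rightarrow> ereal) \<Rightarrow> (('n::finite) mat \<Rightarrow> ereal) \<Rightarrow> ('n::finite) mat \<Rightarrow> ('n::finite) mat
    \<Rightarrow> ('n::finite) mat \<times> ('n::finite) mat \<times> ('n::finite) mat \<Rightarrow> ('n::finite) mat \<times> ('n::finite) mat \<times> ('n::finite) mat \<Rightarrow> bool" where
  "LADMM_step F G a b w w' = (case w of (Xk, Yk, Vk) \<Rightarrow> case w' of (Xn, Yn, Vn) \<Rightarrow>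
      (\<forall>Z. X_obj F a b w Xn \<le> X_obj F a b w Z) \<and>
      (\<forall>Z. Y_obj G b Xn Vk Yn \<le> Y_obj G b Xn Vk Z) \<and>
      Vn = Vk + hinv b \<circ>\<^sub>H (Xn - Yn))"

definition LADMM_seq :: "(('n::finite) mat \<Rightarrow> ereal) \<Rightarrow> (('n::finite) mat \<Rightarrow> ereal) \<Rightarrow> (nat \<Rightarrow> ('n::finite) mat) \<Rightarrow> (nat \<Rightarrow> ('n::finite) mat)
    \<Rightarrow> ('n::finite) mat \<times> ('n::finite) mat \<times> ('n::finite) mat \<Rightarrow> (nat \<Rightarrow> ('n::finite) mat \<times> ('n::finite) mat \<times> ('n::finite) mat) \<Rightarrow> bool" where
  "LADMM_seq F G \<alpha> \<beta> w0 \<omega> \<longleftrightarrow> \<omega> 0 = w0 \<and> (\<forall>k. LADMM_step F G (\<alpha> k) (\<beta> k) (\<omega> k) (\<omega> (Suc k)))"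

end

theory Submission
  imports Defs
begin

text \<open>With the constant parameters \<alpha> = 1 and \<beta> = 2 (entrywise) both updates are proximal
  steps. Their minimisers exist because the subgradients at a KKT point give affine minorants of
  F and G, and their optimality conditions are subgradient inclusions. Monotonicity of the
  subdifferentials, applied at consecutive iterates and at a KKT point (X*, X*, V*), gives the
  Fejer inequality \<Phi>(k+1) + \<delta>(k) \<le> \<Phi>(k), where \<Phi>(k) is the weighted squared distance
  |X - X*|^2/2 + |Y - X*|^2/2 + 2|V - V*|^2 of the k-th iterate and \<delta>(k) the same quantity for
  the step from the k-th to the (k+1)-st iterate. Hence the iterates are bounded and their steps
  vanish; closedness of the subdifferential graphs makes every cluster point a KKT point, and
  Fejer monotonicity with respect to that cluster point forces the whole sequence to converge.\<close>

lemma closed_fun_tendsto_le: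
  fixes f :: "'a::topological_space \<Rightarrow> ereal"
  assumes "closed_fun f" and "xs \<longlonglongrightarrow> x" and "ts \<longlonglongrightarrow> t"
    and "eventually (\<lambda>k. f (xs k) \<le> ereal (ts k)) sequentially"
  shows "f x \<le> ereal t"
proof -
  have "(x, t) \<in> epigraph_e f"
  proof (rule Lim_in_closed_set)
    show "closed (epigraph_e f)" using assms(1) by (simp add: closed_fun_def)
    show "((\<lambda>k. (xs k, ts k)) \<longlongrightarrow> (x, t)) sequentially"
      using assms(2,3) by (rule tendsto_Pair)
  qed (use assms(4) in \<open>auto simp: epigraph_e_def\<close>)
  then show ?thesis by (simp add: epigraph_e_def)
qed

lemma closed_funI:
  fixes f :: "'a::first_countable_topology \<Rightarrow> ereal"
  assumes "\<And>xs x ts t. xs \<longlonglongrightarrow> x \<Longrightarrow> ts \<longlonglongrightarrow> t \<Longrightarrow> (\<And>k. f (xs k) \<le> ereal (ts k)) \<Longrightarrow> f x \<le> ereal t"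
  shows "closed_fun f"
  unfolding closed_fun_def closed_sequential_limits
proof (intro allI impI, elim conjE)
  fix s :: "nat \<Rightarrow> 'a \<times> real" and l
  assume "\<forall>k. s k \<in> epigraph_e f" and s: "s \<longlonglongrightarrow> l"
  then have "f (fst l) \<le> ereal (snd l)"
    using assms[OF tendsto_fst[OF s] tendsto_snd[OF s]]
    by (simp add: epigraph_e_def case_prod_beta)
  then show "l \<in> epigraph_e f"
    by (simp add: epigraph_e_def case_prod_beta)
qed

lemma closed_fun_add_continuous:
  fixes f :: "'a::first_countable_topology \<Rightarrow> ereal"
  assumes "closed_fun f" and "continuous_on UNIV g"
  shows "closed_fun (\<lambda>z. f z + ereal (g z))"
proof (rule closed_funI)
  fix xs x ts t
  assume xs: "xs \<longlonglongrightarrow> x" and ts: "ts \<longlonglongrightarrow> t" and le: "\<And>k. f (xs k) + ereal (g (xs k)) \<le> ereal (ts k)"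
  have "(\<lambda>k. ts k - g (xs k)) \<longlonglongrightarrow> t - g x"
    using continuous_on_tendsto_compose[OF assms(2) xs] by (intro tendsto_diff ts) simp
  moreover have "f (xs k) \<le> ereal (ts k - g (xs k))" for k
    using le[of k] by (cases "f (xs k)") auto
  ultimately have "f x \<le> ereal (t - g x)"
    by (intro closed_fun_tendsto_le[OF assms(1) xs]) auto
  then show "f x + ereal (g x) \<le> ereal t"
    by (cases "f x") auto
qed

lemma convex_fun_le_combination:
  fixes f :: "'a::real_vector \<Rightarrow> ereal"
  assumes "convex_fun f" and "f x = ereal a" and "f z = ereal b" and "0 \<le> t" and "t \<le> 1"
  shows "f ((1 - t) *\<^sub>R x + t *\<^sub>R z) \<le> ereal ((1 - t) * a + t * b)"
proof -
  have "(x, a) \<in> epigraph_e f" "(z, b) \<in> epigraph_e f"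
    using assms(2,3) by (auto simp: epigraph_e_def)
  then have "(1 - t) *\<^sub>R (x, a) + t *\<^sub>R (z, b) \<in> epigraph_e f"
    using assms(1,4,5) unfolding convex_fun_def by (intro convexD) auto
  then show ?thesis by (simp add: epigraph_e_def)
qed

lemma subdiffE:
  assumes "p \<in> subdiff f x"
  obtains a where "f x = ereal a" and "\<And>z. ereal (a + inner p (z - x)) \<le> f z"
proof -
  from assms have fin: "\<bar>f x\<bar> \<noteq> \<infinity>" and le: "\<And>z. f x + ereal (inner p (z - x)) \<le> f z"
    by (auto simp: subdiff_def)
  from fin obtain a where a: "f x = ereal a" by (cases "f x") auto
  show thesis
  proof (rule that[OF a])
    show "ereal (a + inner p (z - x)) \<le> f z" for z using le[of z] a by simp
  qed
qed

lemma subdiff_monotone: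
  assumes "p \<in> subdiff f x" and "q \<in> subdiff f y"
  shows "0 \<le> inner (p - q) (x - y)"
proof -
  obtain a where a: "f x = ereal a" "\<And>z. ereal (a + inner p (z - x)) \<le> f z"
    using assms(1) by (rule subdiffE) blast
  obtain b where b: "f y = ereal b" "\<And>z. ereal (b + inner q (z - y)) \<le> f z"
    using assms(2) by (rule subdiffE) blast
  have "a + inner p (y - x) \<le> b" and "b + inner q (x - y) \<le> a"
    using a(2)[of y] b(2)[of x] a(1) b(1) by simp_all
  moreover have "inner p (y - x) = - inner p (x - y)"
    by (simp add: inner_diff_right)
  ultimately show ?thesis by (simp add: inner_diff_left)
qed

lemma subdiff_closed_graph:
  fixes f :: "'a::real_inner \<Rightarrow> ereal"
  assumes "closed_fun f" and xs: "xs \<longlonglongrightarrow> x" and gs: "gs \<longlonglongrightarrow> g"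
    and sub: "\<And>k. gs k \<in> subdiff f (xs k)"
  shows "g \<in> subdiff f x"
proof -
  have lim: "f x \<le> ereal (b - inner g (z - x))" if "f z = ereal b" for z b
  proof (rule closed_fun_tendsto_le[OF assms(1) xs])
    show "(\<lambda>k. b - inner (gs k) (z - xs k)) \<longlonglongrightarrow> b - inner g (z - x)"
      by (intro tendsto_intros gs xs)
    show "\<forall>\<^sub>F k in sequentially. f (xs k) \<le> ereal (b - inner (gs k) (z - xs k))"
    proof (rule always_eventually, rule allI)
      fix k
      obtain a where "f (xs k) = ereal a" "\<And>y. ereal (a + inner (gs k) (y - xs k)) \<le> f y"
        using sub[of k] by (rule subdiffE) blast
      then show "f (xs k) \<le> ereal (b - inner (gs k) (z - xs k))"
        using that[symmetric] by (metis ereal_less_eq(3) le_diff_eq)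
    qed
  qed
  obtain a0 where a0: "f (xs 0) = ereal a0" "\<And>z. ereal (a0 + inner (gs 0) (z - xs 0)) \<le> f z"
    using sub[of 0] by (rule subdiffE) blast
  have "f x \<noteq> \<infinity>" using lim[OF a0(1)] by auto
  moreover have "f x \<noteq> -\<infinity>" using a0(2)[of x] by auto
  ultimately obtain a where a: "f x = ereal a" by (cases "f x") auto
  have "f x + ereal (inner g (z - x)) \<le> f z" for z
  proof (cases "f z")
    case (real b)
    then show ?thesis using lim[OF real] a by simp
  next
    case MInf
    then show ?thesis using a0(2)[of z] by simp
  qed simp
  then show ?thesis using a by (simp add: subdiff_def)
qed

lemma closed_fun_attains_min:
  fixes f :: "'a::heine_borel \<Rightarrow> ereal"
  assumes "closed_fun f" and lower: "\<And>z. ereal L \<le> f z"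
    and sublevel: "\<And>t. bounded {z. f z \<le> ereal t}" and "f x0 \<noteq> \<infinity>"
  shows "\<exists>x. \<forall>z. f x \<le> f z"
proof -
  define I where "I = (INF z. f z)"
  have "ereal L \<le> I" and "I \<le> f x0"
    unfolding I_def by (auto intro: INF_greatest lower INF_lower)
  with assms(4) obtain i where i: "I = ereal i" by (cases I) auto
  have "\<exists>z. f z < ereal (i + inverse (real (Suc k)))" for k
  proof -
    have "I < ereal (i + inverse (real (Suc k)))" using i by simp
    then show ?thesis unfolding I_def by (simp add: INF_less_iff)
  qed
  then obtain zs where zs: "\<And>k. f (zs k) < ereal (i + inverse (real (Suc k)))" by metis
  have "f (zs k) \<le> ereal (i + 1)" for k
  proof -
    have "inverse (real (Suc k)) \<le> 1" by (simp add: inverse_le_1_iff)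
    then show ?thesis using zs[of k] by (meson ereal_less_eq(3) add_left_mono less_imp_le order_trans)
  qed
  then have "bounded (range zs)"
    by (intro bounded_subset[OF sublevel[of "i + 1"]]) auto
  then obtain x r where r: "strict_mono r" "(zs \<circ> r) \<longlonglongrightarrow> x"
    using bounded_imp_convergent_subsequence by blast
  have "(\<lambda>k. i + inverse (real (Suc (r k)))) \<longlonglongrightarrow> i + 0"
    using LIMSEQ_subseq_LIMSEQ[OF LIMSEQ_inverse_real_of_nat r(1)]
    by (intro tendsto_add tendsto_const) (simp add: comp_def)
  then have "f x \<le> ereal (i + 0)"
    using zs by (intro closed_fun_tendsto_le[OF assms(1) r(2)] always_eventually allI)
                (auto intro: less_imp_le)
  then have "f x \<le> I" using i by simp
  then show ?thesis
    unfolding I_def by (meson INF_lower UNIV_I order_trans)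
qed

lemma power2_norm_add_scaleR:
  fixes a b :: "'a::real_inner"
  shows "(norm (a + t *\<^sub>R b))\<^sup>2 = (norm a)\<^sup>2 + 2 * t * inner a b + t\<^sup>2 * (norm b)\<^sup>2"
proof -
  have "inner (a + t *\<^sub>R b) (a + t *\<^sub>R b) = inner a a + 2 * t * inner a b + t\<^sup>2 * inner b b"
    by (simp add: inner_add_left inner_add_right inner_commute power2_eq_square algebra_simps)
  then show ?thesis by (simp only: power2_norm_eq_inner)
qed

lemma subdiff_quadratic_minorant:
  assumes "p \<in> subdiff f x0" and "c > 0"
  shows "\<exists>L. \<forall>z. ereal (L + c * (norm (z - (u - (1 / (2 * c)) *\<^sub>R p)))\<^sup>2)
                  \<le> f z + ereal (c * (norm (z - u))\<^sup>2)"
proof -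
  obtain a where a: "\<And>z. ereal (a + inner p (z - x0)) \<le> f z"
    using assms(1) by (rule subdiffE) blast
  define L where "L = a + inner p (u - x0) - (norm p)\<^sup>2 / (4 * c)"
  have "L + c * (norm (z - (u - (1 / (2 * c)) *\<^sub>R p)))\<^sup>2 = a + inner p (z - x0) + c * (norm (z - u))\<^sup>2"
    for z
  proof -
    have "z - (u - (1 / (2 * c)) *\<^sub>R p) = (z - u) + (1 / (2 * c)) *\<^sub>R p"
      by (simp add: algebra_simps)
    then have "(norm (z - (u - (1 / (2 * c)) *\<^sub>R p)))\<^sup>2
        = (norm (z - u))\<^sup>2 + 2 * (1 / (2 * c)) * inner (z - u) p + (1 / (2 * c))\<^sup>2 * (norm p)\<^sup>2"
      by (simp only: power2_norm_add_scaleR)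
    then show ?thesis
      using assms(2)
      by (simp add: L_def inner_diff_right inner_commute field_simps power2_eq_square)
  qed
  then have "ereal (L + c * (norm (z - (u - (1 / (2 * c)) *\<^sub>R p)))\<^sup>2) \<le> f z + ereal (c * (norm (z - u))\<^sup>2)"
    for z
    using add_right_mono[OF a[of z], of "ereal (c * (norm (z - u))\<^sup>2)"] by simp
  then show ?thesis by blast
qed

lemma proximal_point_exists:
  fixes f :: "'a::euclidean_space \<Rightarrow> ereal"
  assumes "closed_fun f" and "p \<in> subdiff f x0" and "c > 0"
  shows "\<exists>x. \<forall>z. f x + ereal (c * (norm (x - u))\<^sup>2) \<le> f z + ereal (c * (norm (z - u))\<^sup>2)"
proof -
  define h where "h z = f z + ereal (c * (norm (z - u))\<^sup>2)" for z
  define w where "w = u - (1 / (2 * c)) *\<^sub>R p"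
  obtain L where L: "\<And>z. ereal (L + c * (norm (z - w))\<^sup>2) \<le> h z"
    using subdiff_quadratic_minorant[OF assms(2,3), of u] unfolding h_def w_def by blast
  have "closed_fun h"
    unfolding h_def by (intro closed_fun_add_continuous assms(1) continuous_intros)
  moreover have "ereal L \<le> h z" for z
    using L[of z] assms(3) by (meson ereal_less_eq(3) le_add_same_cancel1 order_trans
        mult_nonneg_nonneg less_imp_le zero_le_power2)
  moreover have "bounded {z. h z \<le> ereal t}" for t
  proof (rule bounded_subset[OF bounded_cball])
    show "{z. h z \<le> ereal t} \<subseteq> cball w (sqrt ((t - L) / c))"
    proof
      fix z assume "z \<in> {z. h z \<le> ereal t}"
      then have "L + c * (norm (z - w))\<^sup>2 \<le> t" using L[of z] by (meson ereal_less_eq(3) mem_Collect_eq order_trans)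
      then have "(norm (z - w))\<^sup>2 \<le> (t - L) / c" using assms(3) by (simp add: field_simps)
      then show "z \<in> cball w (sqrt ((t - L) / c))"
        by (simp add: dist_norm norm_minus_commute real_le_rsqrt)
    qed
  qed
  moreover obtain a where "f x0 = ereal a" using assms(2) by (rule subdiffE) blast
  then have "h x0 \<noteq> \<infinity>" by (simp add: h_def)
  ultimately show ?thesis
    unfolding h_def[symmetric] by (rule closed_fun_attains_min)
qed

lemma proximal_point_subdiff:
  fixes f :: "'a::real_inner \<Rightarrow> ereal"
  assumes "proper_fun f" and "convex_fun f" and "c > 0"
    and min: "\<And>z. f x + ereal (c * (norm (x - u))\<^sup>2) \<le> f z + ereal (c * (norm (z - u))\<^sup>2)"
  shows "(2 * c) *\<^sub>R (u - x) \<in> subdiff f x"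
proof -
  obtain z0 where "f z0 \<noteq> \<infinity>" and "f z0 \<noteq> -\<infinity>"
    using assms(1) by (auto simp: proper_fun_def)
  then have "f x \<noteq> \<infinity>" using min[of z0] by auto
  moreover have "f x \<noteq> -\<infinity>" using assms(1) by (simp add: proper_fun_def)
  ultimately obtain a where a: "f x = ereal a" by (cases "f x") auto
  have "a + inner ((2 * c) *\<^sub>R (u - x)) (z - x) \<le> b" if b: "f z = ereal b" for z b
  proof -
    define D where "D = b - a + 2 * c * inner (x - u) (z - x)"
    have near: "0 \<le> D + t * (c * (norm (z - x))\<^sup>2)" if t: "0 < t" "t \<le> 1" for t
    proof -
      define xt where "xt = (1 - t) *\<^sub>R x + t *\<^sub>R z"
      have "xt - u = (x - u) + t *\<^sub>R (z - x)" by (simp add: xt_def algebra_simps)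
      then have sq: "(norm (xt - u))\<^sup>2 = (norm (x - u))\<^sup>2 + 2 * t * inner (x - u) (z - x) + t\<^sup>2 * (norm (z - x))\<^sup>2"
        by (simp only: power2_norm_add_scaleR)
      have "ereal (a + c * (norm (x - u))\<^sup>2) \<le> f xt + ereal (c * (norm (xt - u))\<^sup>2)"
        using min[of xt] a by simp
      also have "\<dots> \<le> ereal ((1 - t) * a + t * b) + ereal (c * (norm (xt - u))\<^sup>2)"
        unfolding xt_def using convex_fun_le_combination[OF assms(2) a b] t
        by (intro add_right_mono) auto
      finally have "0 \<le> t * (D + t * (c * (norm (z - x))\<^sup>2))"
        unfolding D_def sq by (simp add: algebra_simps power2_eq_square)
      then show ?thesis using t by (simp add: zero_le_mult_iff)
    qed
    have "((\<lambda>t. D + t * (c * (norm (z - x))\<^sup>2)) \<longlongrightarrow> D + 0 * (c * (norm (z - x))\<^sup>2)) (at_right 0)"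
      by (intro tendsto_intros)
    moreover have "\<forall>\<^sub>F t in at_right 0. 0 \<le> D + t * (c * (norm (z - x))\<^sup>2)"
      using near by (auto simp: eventually_at_right[of 0 1] intro!: exI[of _ 1])
    ultimately have "0 \<le> D"
      by (simp add: tendsto_lowerbound trivial_limit_at_right_real)
    then show ?thesis
      by (simp add: D_def inner_diff_left inner_diff_right algebra_simps)
  qed
  then have "f x + ereal (inner ((2 * c) *\<^sub>R (u - x)) (z - x)) \<le> f z" for z
    using a assms(1) by (cases "f z") (auto simp: proper_fun_def)
  then show ?thesis using a by (simp add: subdiff_def)
qed

definition ladmm_energy :: "'a::real_normed_vector \<Rightarrow> 'a \<Rightarrow> 'a \<Rightarrow> real" where
  "ladmm_energy x y v = (1/2) * (norm x)\<^sup>2 + (1/2) * (norm y)\<^sup>2 + 2 * (norm v)\<^sup>2"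

lemma ladmm_energy_nonneg: "0 \<le> ladmm_energy x y v"
  by (simp add: ladmm_energy_def)

lemma power2_norm_le_ladmm_energy:
  shows "(norm x)\<^sup>2 \<le> 2 * ladmm_energy x y v"
    and "(norm y)\<^sup>2 \<le> 2 * ladmm_energy x y v"
    and "(norm v)\<^sup>2 \<le> 1/2 * ladmm_energy x y v"
  by (simp_all add: ladmm_energy_def)

lemma tendsto_zero_of_power2_norm_le:
  fixes f :: "nat \<Rightarrow> 'a::real_normed_vector"
  assumes "\<And>k. (norm (f k))\<^sup>2 \<le> c * b k" and "b \<longlonglongrightarrow> 0"
  shows "f \<longlonglongrightarrow> 0"
proof -
  have "(\<lambda>k. (norm (f k))\<^sup>2) \<longlonglongrightarrow> 0"
  proof (rule tendsto_sandwich[OF _ _ tendsto_const])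
    show "(\<lambda>k. c * b k) \<longlonglongrightarrow> 0" using assms(2) by (rule tendsto_mult_right_zero)
  qed (use assms(1) in \<open>simp_all add: always_eventually\<close>)
  then have "(\<lambda>k. sqrt ((norm (f k))\<^sup>2)) \<longlonglongrightarrow> sqrt 0"
    by (rule tendsto_real_sqrt)
  then show ?thesis by (simp add: tendsto_norm_zero_iff)
qed

lemma bounded_range_of_power2_norm_le:
  assumes "\<And>k. (norm (f k - a))\<^sup>2 \<le> M"
  shows "bounded (range f)"
proof (rule bounded_subset[OF bounded_cball])
  show "range f \<subseteq> cball a (sqrt M)"
    using real_le_rsqrt[OF assms] by (auto simp: dist_norm norm_minus_commute)
qed

lemma tendsto_Pair_iff:
  "((\<lambda>x. (f x, g x)) \<longlongrightarrow> (a, b)) F \<longleftrightarrow> (f \<longlongrightarrow> a) F \<and> (g \<longlongrightarrow> b) F"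
proof (intro iffI conjI)
  assume lim: "((\<lambda>x. (f x, g x)) \<longlongrightarrow> (a, b)) F"
  show "(f \<longlongrightarrow> a) F" using tendsto_fst[OF lim] by simp
  show "(g \<longlongrightarrow> b) F" using tendsto_snd[OF lim] by simp
qed (auto intro: tendsto_Pair)

lemma LIMSEQ_subseq_Suc:
  fixes f :: "nat \<Rightarrow> 'a::real_normed_vector"
  assumes "strict_mono r" and "(\<lambda>j. f (r j)) \<longlonglongrightarrow> l" and "(\<lambda>k. f (Suc k) - f k) \<longlonglongrightarrow> 0"
  shows "(\<lambda>j. f (Suc (r j))) \<longlonglongrightarrow> l"
proof -
  have "(\<lambda>j. f (r j) + (f (Suc (r j)) - f (r j))) \<longlonglongrightarrow> l + 0"
    using LIMSEQ_subseq_LIMSEQ[OF assms(3,1)] by (intro tendsto_add assms(2)) (simp add: comp_def)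
  then show ?thesis by simp
qed

text \<open>The optimality conditions of the LADMM steps with \<alpha> = 1 and \<beta> = 2, indexed from the
  first iterate on, so that already V 0 \<in> \<partial>G(Y 0).\<close>

locale ladmm_trajectory =
  fixes F G :: "'a::euclidean_space \<Rightarrow> ereal" and X Y V :: "nat \<Rightarrow> 'a"
  assumes closed_F: "closed_fun F" and closed_G: "closed_fun G"
    and x_optimality: "\<And>k. - V (Suc k) + (1/2) *\<^sub>R (X k - X (Suc k)) + (1/2) *\<^sub>R (Y k - Y (Suc k))
                       \<in> subdiff F (X (Suc k))"
    and y_optimality: "\<And>k. V k \<in> subdiff G (Y k)"
    and dual_update: "\<And>k. V (Suc k) = V k + (1/2) *\<^sub>R (X (Suc k) - Y (Suc k))"
begin

definition lyapunov :: "'a \<Rightarrow> 'a \<Rightarrow> nat \<Rightarrow> real" where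
  "lyapunov Xs Vs k = ladmm_energy (X k - Xs) (Y k - Xs) (V k - Vs)"

definition increment :: "nat \<Rightarrow> real" where
  "increment k = ladmm_energy (X (Suc k) - X k) (Y (Suc k) - Y k) (V (Suc k) - V k)"

lemma lyapunov_Suc_le:
  assumes KKT: "- Vs \<in> subdiff F Xs" "Vs \<in> subdiff G Xs"
  shows "lyapunov Xs Vs (Suc k) + increment k \<le> lyapunov Xs Vs k"
proof -
  define a where "a = V (Suc k) - Vs"
  define x where "x = X (Suc k) - Xs"
  define y where "y = Y (Suc k) - Xs"
  define dV where "dV = V (Suc k) - V k"
  define dX where "dX = X (Suc k) - X k"
  define dY where "dY = Y (Suc k) - Y k"
  have "0 \<le> inner (- V (Suc k) + (1/2) *\<^sub>R (X k - X (Suc k)) + (1/2) *\<^sub>R (Y k - Y (Suc k)) - - Vs) x"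
    unfolding x_def by (rule subdiff_monotone[OF x_optimality KKT(1)])
  also have "\<dots> = - inner a x - (1/2) * inner dX x - (1/2) * inner dY x"
    by (simp add: a_def dX_def dY_def inner_diff_left inner_add_left algebra_simps)
  finally have F_mono: "0 \<le> - inner a x - (1/2) * inner dX x - (1/2) * inner dY x" .
  have G_mono: "0 \<le> inner a y" "0 \<le> inner dV dY"
    unfolding a_def y_def dV_def dY_def
    by (rule subdiff_monotone[OF y_optimality KKT(2)], rule subdiff_monotone[OF y_optimality y_optimality])
  txt \<open>The dual update turns the three monotonicity inequalities into one inequality between
    inner products, which polarisation rewrites in terms of squared norms.\<close>
  have "x = 2 *\<^sub>R dV + y"
    by (simp add: x_def y_def dV_def dual_update algebra_simps)
  then have "2 * inner a dV + (1/2) * inner x dX + (1/2) * inner y dY \<le> 0"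
    using F_mono G_mono by (simp add: inner_add_right inner_commute algebra_simps)
  moreover have "2 * inner a dV = (norm a)\<^sup>2 + (norm dV)\<^sup>2 - (norm (V k - Vs))\<^sup>2"
    using dot_norm_neg[of a dV] by (simp add: a_def dV_def)
  moreover have "2 * inner x dX = (norm x)\<^sup>2 + (norm dX)\<^sup>2 - (norm (X k - Xs))\<^sup>2"
    using dot_norm_neg[of x dX] by (simp add: x_def dX_def)
  moreover have "2 * inner y dY = (norm y)\<^sup>2 + (norm dY)\<^sup>2 - (norm (Y k - Xs))\<^sup>2"
    using dot_norm_neg[of y dY] by (simp add: y_def dY_def)
  ultimately show ?thesis
    unfolding lyapunov_def increment_def ladmm_energy_def
      a_def[symmetric] x_def[symmetric] y_def[symmetric] dV_def[symmetric] dX_def[symmetric] dY_def[symmetric]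
    by linarith
qed

lemma increment_nonneg: "0 \<le> increment k"
  by (simp add: increment_def ladmm_energy_nonneg)

lemma lyapunov_decseq:
  assumes "- Vs \<in> subdiff F Xs" "Vs \<in> subdiff G Xs"
  shows "decseq (lyapunov Xs Vs)"
proof (rule decseq_SucI)
  show "lyapunov Xs Vs (Suc k) \<le> lyapunov Xs Vs k" for k
    using lyapunov_Suc_le[OF assms, of k] increment_nonneg[of k] by linarith
qed

lemma lyapunov_convergent:
  assumes "- Vs \<in> subdiff F Xs" "Vs \<in> subdiff G Xs"
  obtains L where "lyapunov Xs Vs \<longlonglongrightarrow> L"
  by (rule decseq_convergent[OF lyapunov_decseq[OF assms], where B=0])
     (simp add: lyapunov_def ladmm_energy_nonneg)

lemma increment_tendsto_zero:
  assumes "- Vs \<in> subdiff F Xs" "Vs \<in> subdiff G Xs"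
  shows "increment \<longlonglongrightarrow> 0"
proof -
  obtain L where L: "lyapunov Xs Vs \<longlonglongrightarrow> L"
    using lyapunov_convergent[OF assms] .
  have decrease: "(\<lambda>k. lyapunov Xs Vs k - lyapunov Xs Vs (Suc k)) \<longlonglongrightarrow> 0"
    using tendsto_diff[OF L LIMSEQ_Suc[OF L]] by simp
  show ?thesis
  proof (rule tendsto_sandwich[OF _ _ tendsto_const decrease])
    show "\<forall>\<^sub>F k in sequentially. increment k \<le> lyapunov Xs Vs k - lyapunov Xs Vs (Suc k)"
      using lyapunov_Suc_le[OF assms] by (simp add: always_eventually algebra_simps)
  qed (simp add: increment_nonneg)
qed

lemma differences_tendsto_zero:
  assumes "- Vs \<in> subdiff F Xs" "Vs \<in> subdiff G Xs"
  shows "(\<lambda>k. X (Suc k) - X k) \<longlonglongrightarrow> 0" and "(\<lambda>k. Y (Suc k) - Y k) \<longlonglongrightarrow> 0"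
    and "(\<lambda>k. V (Suc k) - V k) \<longlonglongrightarrow> 0"
  by (rule tendsto_zero_of_power2_norm_le[OF _ increment_tendsto_zero[OF assms]],
      unfold increment_def, rule power2_norm_le_ladmm_energy)+

lemma bounded_trajectory:
  assumes "- Vs \<in> subdiff F Xs" "Vs \<in> subdiff G Xs"
  shows "bounded (range (\<lambda>k. (X k, Y k, V k)))"
proof -
  have le0: "lyapunov Xs Vs k \<le> lyapunov Xs Vs 0" for k
    using lyapunov_decseq[OF assms] by (simp add: decseq_def)
  have "(norm (X k - Xs))\<^sup>2 \<le> 2 * lyapunov Xs Vs 0" "(norm (Y k - Xs))\<^sup>2 \<le> 2 * lyapunov Xs Vs 0"
    "(norm (V k - Vs))\<^sup>2 \<le> 1/2 * lyapunov Xs Vs 0" for k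
    using power2_norm_le_ladmm_energy[where x="X k - Xs" and y="Y k - Xs" and v="V k - Vs"] le0[of k]
    unfolding lyapunov_def by - (linarith+)
  then have "bounded (range X)" "bounded (range Y)" "bounded (range V)"
    by (blast intro: bounded_range_of_power2_norm_le)+
  then have "bounded (range X \<times> range Y \<times> range V)"
    by (intro bounded_Times)
  then show ?thesis
    by (rule bounded_subset) auto
qed

lemma cluster_point_is_KKT:
  assumes "- Vs \<in> subdiff F Xs" "Vs \<in> subdiff G Xs"
    and r: "strict_mono r" and lim: "(\<lambda>j. (X (r j), Y (r j), V (r j))) \<longlonglongrightarrow> (Xb, Yb, Vb)"
  shows "Yb = Xb" and "- Vb \<in> subdiff F Xb" and "Vb \<in> subdiff G Xb"
proof -
  have X: "(\<lambda>j. X (r j)) \<longlonglongrightarrow> Xb" and Y: "(\<lambda>j. Y (r j)) \<longlonglongrightarrow> Yb" and V: "(\<lambda>j. V (r j)) \<longlonglongrightarrow> Vb"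
    using lim by (simp_all add: tendsto_Pair_iff)
  note diffs = differences_tendsto_zero[OF assms(1,2)]
  have X': "(\<lambda>j. X (Suc (r j))) \<longlonglongrightarrow> Xb" and Y': "(\<lambda>j. Y (Suc (r j))) \<longlonglongrightarrow> Yb"
    and V': "(\<lambda>j. V (Suc (r j))) \<longlonglongrightarrow> Vb"
    using LIMSEQ_subseq_Suc[OF r X diffs(1)] LIMSEQ_subseq_Suc[OF r Y diffs(2)]
      LIMSEQ_subseq_Suc[OF r V diffs(3)] .
  have "(\<lambda>j. V (Suc (r j))) \<longlonglongrightarrow> Vb + (1/2) *\<^sub>R (Xb - Yb)"
    unfolding dual_update by (intro tendsto_intros V X' Y')
  then have "Vb + (1/2) *\<^sub>R (Xb - Yb) = Vb"
    using V' by (rule LIMSEQ_unique)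
  then show "Yb = Xb" by simp
  then show "Vb \<in> subdiff G Xb"
    using subdiff_closed_graph[OF closed_G Y V y_optimality] by simp
  have "(\<lambda>j. - V (Suc (r j)) + (1/2) *\<^sub>R (X (r j) - X (Suc (r j))) + (1/2) *\<^sub>R (Y (r j) - Y (Suc (r j))))
      \<longlonglongrightarrow> - Vb + (1/2) *\<^sub>R (Xb - Xb) + (1/2) *\<^sub>R (Yb - Yb)"
    by (intro tendsto_intros V' X X' Y Y')
  then show "- Vb \<in> subdiff F Xb"
    using subdiff_closed_graph[OF closed_F X' _ x_optimality] by simp
qed

lemma trajectory_converges:
  assumes "- Vs \<in> subdiff F Xs" "Vs \<in> subdiff G Xs"
  obtains Xb Vb where "- Vb \<in> subdiff F Xb" and "Vb \<in> subdiff G Xb"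
    and "(\<lambda>k. (X k, Y k, V k)) \<longlonglongrightarrow> (Xb, Xb, Vb)"
proof -
  obtain r Xb Yb Vb where r: "strict_mono r"
    and lim: "(\<lambda>j. (X (r j), Y (r j), V (r j))) \<longlonglongrightarrow> (Xb, Yb, Vb)"
  proof -
    obtain l r where "strict_mono r" and "((\<lambda>k. (X k, Y k, V k)) \<circ> r) \<longlonglongrightarrow> l"
      using bounded_imp_convergent_subsequence[OF bounded_trajectory[OF assms]] by blast
    moreover obtain Xb Yb Vb where "l = (Xb, Yb, Vb)" by (cases l)
    ultimately show thesis by (intro that) (auto simp: comp_def)
  qed
  note cluster = cluster_point_is_KKT[OF assms r lim]
  obtain L where L: "lyapunov Xb Vb \<longlonglongrightarrow> L"
    using lyapunov_convergent[OF cluster(2,3)] .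
  have "(\<lambda>j. X (r j) - Xb) \<longlonglongrightarrow> 0" "(\<lambda>j. Y (r j) - Xb) \<longlonglongrightarrow> 0" "(\<lambda>j. V (r j) - Vb) \<longlonglongrightarrow> 0"
    using lim unfolding cluster(1) LIM_zero_iff by (simp_all add: tendsto_Pair_iff)
  then have "(\<lambda>j. lyapunov Xb Vb (r j)) \<longlonglongrightarrow> ladmm_energy 0 0 (0::'a)"
    unfolding lyapunov_def ladmm_energy_def by (intro tendsto_intros)
  moreover have "(\<lambda>j. lyapunov Xb Vb (r j)) \<longlonglongrightarrow> L"
    using LIMSEQ_subseq_LIMSEQ[OF L r] by (simp add: comp_def)
  ultimately have "L = 0"
    by (simp add: LIMSEQ_unique ladmm_energy_def)
  with L have lyap0: "lyapunov Xb Vb \<longlonglongrightarrow> 0" by simp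
  have "(\<lambda>k. X k - Xb) \<longlonglongrightarrow> 0" "(\<lambda>k. Y k - Xb) \<longlonglongrightarrow> 0" "(\<lambda>k. V k - Vb) \<longlonglongrightarrow> 0"
    by (rule tendsto_zero_of_power2_norm_le[OF _ lyap0], unfold lyapunov_def,
        rule power2_norm_le_ladmm_energy)+
  then have "(\<lambda>k. (X k, Y k, V k)) \<longlonglongrightarrow> (Xb, Xb, Vb)"
    unfolding LIM_zero_iff by (simp add: tendsto_Pair_iff)
  with cluster(2,3) show thesis by (rule that)
qed

end

lemma hprod_vec_vec [simp]: "vec (vec r) \<circ>\<^sub>H X = r *\<^sub>R X"
  by (simp add: hprod_def vec_eq_iff)

lemma hinv_vec_vec [simp]: "hinv (vec (vec r)) = vec (vec (1 / r))"
  by (simp add: hinv_def vec_eq_iff)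

lemma hsqrt_vec_vec [simp]: "hsqrt (vec (vec r)) = vec (vec (sqrt r))"
  by (simp add: hsqrt_def vec_eq_iff)

lemma X_obj_scalar:
  assumes "a > 0"
  shows "X_obj F (vec (vec a)) (vec (vec b)) (X, Y, V) Z
           = F Z + ereal (1 / (2 * a) * (norm (Z - (X - a *\<^sub>R V - (a / b) *\<^sub>R (X - Y))))\<^sup>2)"
proof -
  have centre: "Z - X + a *\<^sub>R (V + (1 / b) *\<^sub>R (X - Y)) = Z - (X - a *\<^sub>R V - (a / b) *\<^sub>R (X - Y))"
    by (simp add: algebra_simps)
  have scale: "(norm ((1 / sqrt a) *\<^sub>R u))\<^sup>2 = 1 / a * (norm u)\<^sup>2" for u :: "('n::finite) mat"
    using assms by (simp add: power_mult_distrib power_divide)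
  show ?thesis
    unfolding X_obj_def
    by (simp only: case_prod_conv hsqrt_vec_vec hinv_vec_vec hprod_vec_vec centre scale) simp
qed

lemma Y_obj_scalar:
  assumes "b > 0"
  shows "Y_obj G (vec (vec b)) X V Z = G Z + ereal (1 / (2 * b) * (norm (Z - (X + b *\<^sub>R V)))\<^sup>2)"
proof -
  have centre: "Z - X - b *\<^sub>R V = Z - (X + b *\<^sub>R V)"
    by (simp add: algebra_simps)
  have scale: "(norm ((1 / sqrt b) *\<^sub>R u))\<^sup>2 = 1 / b * (norm u)\<^sup>2" for u :: "('n::finite) mat"
    using assms by (simp add: power_mult_distrib power_divide)
  show ?thesis
    unfolding Y_obj_def
    by (simp only: hsqrt_vec_vec hinv_vec_vec hprod_vec_vec centre scale) simp
qed

lemma LADMM_step_scalar_exists: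
  fixes F G :: "('n::finite) mat \<Rightarrow> ereal"
  assumes "closed_fun F" and "p \<in> subdiff F x0" and "closed_fun G" and "q \<in> subdiff G y0"
    and "a > 0" and "b > 0"
  shows "\<exists>w'. LADMM_step F G (vec (vec a)) (vec (vec b)) w w'"
proof -
  obtain X Y V where w: "w = (X, Y, V)" by (cases w)
  obtain X' where X': "\<forall>z. F X' + ereal (1 / (2 * a) * (norm (X' - (X - a *\<^sub>R V - (a / b) *\<^sub>R (X - Y))))\<^sup>2)
      \<le> F z + ereal (1 / (2 * a) * (norm (z - (X - a *\<^sub>R V - (a / b) *\<^sub>R (X - Y))))\<^sup>2)"
    using proximal_point_exists[OF assms(1,2), where c="1 / (2 * a)"] assms(5) by auto
  obtain Y' where Y': "\<forall>z. G Y' + ereal (1 / (2 * b) * (norm (Y' - (X' + b *\<^sub>R V)))\<^sup>2)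
      \<le> G z + ereal (1 / (2 * b) * (norm (z - (X' + b *\<^sub>R V)))\<^sup>2)"
    using proximal_point_exists[OF assms(3,4), where c="1 / (2 * b)"] assms(6) by auto
  have "LADMM_step F G (vec (vec a)) (vec (vec b)) w (X', Y', V + (1 / b) *\<^sub>R (X' - Y'))"
    unfolding LADMM_step_def w
    using X' Y' by (simp add: X_obj_scalar[OF assms(5)] Y_obj_scalar[OF assms(6)])
  then show ?thesis by blast
qed

lemma LADMM_step_scalar_subdiff:
  fixes F G :: "('n::finite) mat \<Rightarrow> ereal"
  assumes "proper_fun F" and "convex_fun F" and "proper_fun G" and "convex_fun G"
    and "a > 0" and "b > 0"
    and step: "LADMM_step F G (vec (vec a)) (vec (vec b)) (X, Y, V) (X', Y', V')"
  shows "(1 / a) *\<^sub>R (X - a *\<^sub>R V - (a / b) *\<^sub>R (X - Y) - X') \<in> subdiff F X'"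
    and "V' \<in> subdiff G Y'"
    and "V' = V + (1 / b) *\<^sub>R (X' - Y')"
proof -
  show V': "V' = V + (1 / b) *\<^sub>R (X' - Y')"
    using step by (simp add: LADMM_step_def)
  have "(2 * (1 / (2 * a))) *\<^sub>R (X - a *\<^sub>R V - (a / b) *\<^sub>R (X - Y) - X') \<in> subdiff F X'"
    using step assms(5)
    by (intro proximal_point_subdiff[OF assms(1,2)]) (simp_all add: LADMM_step_def X_obj_scalar)
  then show "(1 / a) *\<^sub>R (X - a *\<^sub>R V - (a / b) *\<^sub>R (X - Y) - X') \<in> subdiff F X'"
    by simp
  have "(2 * (1 / (2 * b))) *\<^sub>R (X' + b *\<^sub>R V - Y') \<in> subdiff G Y'"
    using step assms(6)
    by (intro proximal_point_subdiff[OF assms(3,4)]) (simp_all add: LADMM_step_def Y_obj_scalar)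
  moreover have "(2 * (1 / (2 * b))) *\<^sub>R (X' + b *\<^sub>R V - Y') = V'"
    unfolding V' using assms(6) by (simp add: algebra_simps)
  ultimately show "V' \<in> subdiff G Y'" by simp
qed

lemma ladmm_trajectory_of_LADMM_seq:
  fixes F G :: "('n::finite) mat \<Rightarrow> ereal"
  assumes "proper_fun F" "closed_fun F" "convex_fun F" "proper_fun G" "closed_fun G" "convex_fun G"
    and "LADMM_seq F G (\<lambda>_. vec (vec 1)) (\<lambda>_. vec (vec 2)) w0 \<omega>"
  shows "ladmm_trajectory F G (\<lambda>k. fst (\<omega> (Suc k))) (\<lambda>k. fst (snd (\<omega> (Suc k))))
           (\<lambda>k. snd (snd (\<omega> (Suc k))))"
proof -
  define X where "X k = fst (\<omega> k)" for k
  define Y where "Y k = fst (snd (\<omega> k))" for k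
  define V where "V k = snd (snd (\<omega> k))" for k
  have "LADMM_step F G (vec (vec 1)) (vec (vec 2)) (X k, Y k, V k) (X (Suc k), Y (Suc k), V (Suc k))" for k
    using assms(7) by (simp add: LADMM_seq_def X_def Y_def V_def)
  note step = LADMM_step_scalar_subdiff[OF assms(1,3,4,6) zero_less_one zero_less_numeral this]
  show ?thesis
    unfolding X_def[symmetric] Y_def[symmetric] V_def[symmetric]
  proof
    fix k
    have "(1 / 1) *\<^sub>R (X (Suc k) - 1 *\<^sub>R V (Suc k) - (1 / 2) *\<^sub>R (X (Suc k) - Y (Suc k)) - X (Suc (Suc k)))
        = - V (Suc (Suc k)) + (1/2) *\<^sub>R (X (Suc k) - X (Suc (Suc k))) + (1/2) *\<^sub>R (Y (Suc k) - Y (Suc (Suc k)))"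
      unfolding step(3)[of "Suc k"] by (simp add: vec_eq_iff algebra_simps)
    then show "- V (Suc (Suc k)) + (1/2) *\<^sub>R (X (Suc k) - X (Suc (Suc k))) + (1/2) *\<^sub>R (Y (Suc k) - Y (Suc (Suc k)))
        \<in> subdiff F (X (Suc (Suc k)))"
      using step(1)[of "Suc k"] by simp
  qed (use assms(2,5) step(2,3) in simp_all)
qed

theorem theorem2:
  fixes F G :: "real ^ 'n ^ 'n \<Rightarrow> ereal"
    and w0 :: "(real ^ 'n ^ 'n) \<times> (real ^ 'n ^ 'n) \<times> (real ^ 'n ^ 'n)"
  assumes "proper_fun F" "closed_fun F" "convex_fun F"
    and "proper_fun G" "closed_fun G" "convex_fun G"
    and "KKT_set F G \<noteq> {}"
  shows "\<exists>\<alpha> \<beta>. (\<forall>k. (\<alpha> k, \<beta> k) \<in> param_set) \<and>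
           (\<exists>\<omega>. LADMM_seq F G \<alpha> \<beta> w0 \<omega>) \<and>
           (\<forall>\<omega>. LADMM_seq F G \<alpha> \<beta> w0 \<omega> \<longrightarrow> (\<exists>\<omega>s \<in> KKT_set F G. \<omega> \<longlonglongrightarrow> \<omega>s))"
proof -
  obtain Xs Vs where KKT: "- Vs \<in> subdiff F Xs" "Vs \<in> subdiff G Xs"
    using assms(7) by (auto simp: KKT_set_def)
  define \<alpha> :: "nat \<Rightarrow> real ^ 'n ^ 'n" where "\<alpha> = (\<lambda>_. vec (vec 1))"
  define \<beta> :: "nat \<Rightarrow> real ^ 'n ^ 'n" where "\<beta> = (\<lambda>_. vec (vec 2))"
  have "(\<alpha> k, \<beta> k) \<in> param_set" for k
    by (simp add: param_set_def \<alpha>_def \<beta>_def)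
  moreover obtain step where "\<And>w. LADMM_step F G (vec (vec 1)) (vec (vec 2)) w (step w)"
    using LADMM_step_scalar_exists[OF assms(2) KKT(1) assms(5) KKT(2)] by (metis zero_less_one zero_less_numeral)
  then have "LADMM_seq F G \<alpha> \<beta> w0 (\<lambda>k. (step ^^ k) w0)"
    by (simp add: LADMM_seq_def \<alpha>_def \<beta>_def)
  moreover have "\<exists>\<omega>s \<in> KKT_set F G. \<omega> \<longlonglongrightarrow> \<omega>s" if "LADMM_seq F G \<alpha> \<beta> w0 \<omega>" for \<omega>
  proof -
    interpret ladmm_trajectory F G "\<lambda>k. fst (\<omega> (Suc k))" "\<lambda>k. fst (snd (\<omega> (Suc k)))"
        "\<lambda>k. snd (snd (\<omega> (Suc k)))"
      using ladmm_trajectory_of_LADMM_seq[OF assms(1-6)] that unfolding \<alpha>_def \<beta>_def .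
    obtain Xb Vb where "- Vb \<in> subdiff F Xb" "Vb \<in> subdiff G Xb"
      and "(\<lambda>k. \<omega> (Suc k)) \<longlonglongrightarrow> (Xb, Xb, Vb)"
      by (rule trajectory_converges[OF KKT]) (simp add: that)
    then show ?thesis
      by (auto simp: KKT_set_def intro!: bexI[of _ "(Xb, Xb, Vb)"] LIMSEQ_imp_Suc)
  qed
  ultimately show ?thesis by blast
qed

end
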